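(* Let $n\ge0$, $r\in\mathcal{Y}_n$ and let $\mathsf{R}\subseteq[n]$ be an admissible set of internal nodes of $r$ (nodes labeled in-order). Then $r|_{\mathsf{R}}=r'_{\mathsf{R}}$ and $r|_{\mathsf{R}^c}=r''_{\mathsf{R}}$.
   Context: Permutations in one-line notation; $\mathrm{st}$ standardizes sequences of distinct integers. For $\sigma\in\mathfrak{S}_p,\tau\in\mathfrak{S}_q$, $\sigma\vee\tau=(\sigma(1)+q,..,\sigma(p)+q,p+q+1,\tau(1),..,\tau(q))$. Trees: $\mathcal{Y}_n$ = rooted planar binary trees with $n$ internal nodes, $\mathcal{Y}_0=\{|\}$; $s\vee t$ = root with left subtree $s$, right subtree $t$; $|\backslash t=t$, $s\backslash t=s_l\vee(s_r\backslash t)$. $\lambda(\mathrm{id}_0)=|$, $\lambda(\sigma)=\lambda(\mathrm{st}(\sigma(1..j-1)))\vee\lambda(\mathrm{st}(\sigma(j+1..n)))$ where $j=\sigma^{-1}(n)$; $\gamma(|)=\mathrm{id}_0$, $\gamma(t)=\gamma(t_l)\vee\gamma(t_r)$. For $\mathsf{R}=\{R_1<..<R_p\}\subseteq[n]$: $\rho|_{\mathsf{R}}=\mathrm{st}(\rho(R_1),..,\rho(R_p))$ and $r|_{\mathsf{R}}=\lambda(\gamma(r)|_{\mathsf{R}})$; $\mathsf{R}^c=[n]\setminus\mathsf{R}$. In-order labeling: if $r=s\vee t$ with $s\in\mathcal{Y}_{j-1}$, the root is labeled $j$, nodes of $s$ keep their labels, nodes of $t$ get their labels increased by $j$. $\mathsf{R}$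 is admissible if for each $x\in\mathsf{R}$ the left child of $x$ and all its internal descendants lie in $\mathsf{R}$. Pruning: cut every edge joining a node of $\mathsf{R}$ to a node not in $\mathsf{R}$; the pieces containing nodes of $\mathsf{R}$ are planar binary trees $r_1,..,r_p$ ordered left to right by the positions of their leaves, and $r'_{\mathsf{R}}=r_1\backslash\cdots\backslash r_p$; the remaining pieces are assembled into $r''_{\mathsf{R}}$ by grafting each piece onto the leaf, of the piece immediately below it, that lies below its root. Equivalently, recursively: $|'=|''=|$; for $r=s\vee t$, $\mathsf{S}=\mathsf{R}\cap s$, $\mathsf{T}=\mathsf{R}\cap t$: if the root is in $\mathsf{R}$, $r'_{\mathsf{R}}=s\vee t'_{\mathsf{T}}$, $r''_{\mathsf{R}}=t''_{\mathsf{T}}$; otherwise $r'_{\mathsf{R}}=s'_{\mathsf{S}}\backslash t'_{\mathsf{T}}$, $r''_{\mathsf{R}}=s''_{\mathsf{S}}\vee t''_{\mathsf{T}}$. *)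

theory Defs
  imports Main
begin

text \<open>Rooted planar binary trees; Leaf is the tree with no internal node.\<close>
datatype tree = Leaf | Node tree tree

fun isize :: "tree \<Rightarrow> nat" where
  "isize Leaf = 0"
| "isize (Node l r) = isize l + isize r + 1"

text \<open>Permutations in one-line notation as lists of naturals (values 1..n).
  Standardization of a sequence of distinct integers: replace each entry by its rank.\<close>
definition st :: "nat list \<Rightarrow> nat list" where
  "st xs = map (\<lambda>x. card {y \<in> set xs. y \<le> x}) xs"

lemma length_st[simp]: "length (st xs) = length xs"
  by (simp add: st_def)

definition vee :: "nat list \<Rightarrow> nat list \<Rightarrow> nat list" where
  "vee \<sigma> \<tau> = map (\<lambda>x. x + length \<tau>) \<sigma> @ [length \<sigma> + length \<tau> + 1] @ \<tau>"

lemma takeWhile_lt_helper: "c \<in> set xs \<Longrightarrow> length (takeWhile (\<lambda>x. x \<noteq> c) xs) < length xs"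
  by (induction xs) auto

text \<open>lambda: j = sigma^{-1}(n), the 1-based position of the value n = length sigma
  (so take (j-1) / drop j in 1-based terms).  On non-permutations (where n does not
  occur) the value is irrelevant junk (Leaf); lam is only ever applied to permutations.\<close>
function lam :: "nat list \<Rightarrow> tree" where
  "lam [] = Leaf"
| "lam (a # xs) =
     (let \<sigma> = a # xs; j = length (takeWhile (\<lambda>x. x \<noteq> length \<sigma>) \<sigma>)
      in if length \<sigma> \<in> set \<sigma>
         then Node (lam (st (take j \<sigma>))) (lam (st (drop (Suc j) \<sigma>)))
         else Leaf)"
  by pat_completeness auto
termination
  apply (relation "measure length")
    apply simp
  subgoal for a xs x xa using takeWhile_lt_helper[of "length x" x] by simp
  subgoal for a xs x xa by simp
  done

fun gam :: "tree \<Rightarrow> nat list" where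
  "gam Leaf = []"
| "gam (Node l r) = vee (gam l) (gam r)"

text \<open>Restriction of a permutation to a set R of positions (1-based).\<close>
definition restr_perm :: "nat list \<Rightarrow> nat set \<Rightarrow> nat list" where
  "restr_perm \<rho> R = st (map (\<lambda>i. \<rho> ! (i - 1)) (sorted_list_of_set R))"

definition restr_tree :: "tree \<Rightarrow> nat set \<Rightarrow> tree" where
  "restr_tree r R = lam (restr_perm (gam r) R)"

fun under :: "tree \<Rightarrow> tree \<Rightarrow> tree" where
  "under Leaf t = t"
| "under (Node sl sr) t = Node sl (under sr t)"

text \<open>In-order labeling: lsub r x = labels of the left child of node x and all its internal
  descendants (i.e. the internal nodes of the left subtree of x).\<close>
fun lsub :: "tree \<Rightarrow> nat \<Rightarrow> nat set" where
  "lsub Leaf x = {}"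
| "lsub (Node s t) x =
     (let j = isize s + 1 in
      if x = j then {1..isize s}
      else if x < j then lsub s x
      else (\<lambda>y. y + j) ` lsub t (x - j))"

definition admissible :: "tree \<Rightarrow> nat set \<Rightarrow> bool" where
  "admissible r R \<longleftrightarrow> R \<subseteq> {1..isize r} \<and> (\<forall>x\<in>R. lsub r x \<subseteq> R)"

text \<open>Pruning, via the recursive description (labels of the right subtree are shifted back).\<close>
fun prune1 :: "tree \<Rightarrow> nat set \<Rightarrow> tree" where
  "prune1 Leaf R = Leaf"
| "prune1 (Node s t) R =
     (let j = isize s + 1; S = {x \<in> R. x < j}; T = (\<lambda>x. x - j) ` {x \<in> R. j < x} in
      if j \<in> R then Node s (prune1 t T) else under (prune1 s S) (prune1 t T))"

fun prune2 :: "tree \<Rightarrow> nat set \<Rightarrow> tree" where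
  "prune2 Leaf R = Leaf"
| "prune2 (Node s t) R =
     (let j = isize s + 1; S = {x \<in> R. x < j}; T = (\<lambda>x. x - j) ` {x \<in> R. j < x} in
      if j \<in> R then prune2 t T else Node (prune2 s S) (prune2 t T))"

end

theory Submission
  imports Defs
begin

text \<open>The map \<open>\<lambda>\<close> sends a word of distinct integers to its decreasing tree (the maximum is
  the root, the factors on its left and right give the subtrees), and the decreasing tree only
  depends on the relative order of the entries. So \<open>r|\<^sub>R\<close> is the decreasing tree of the
  subword of \<open>\<gamma>(r)\<close> at the positions in \<open>R\<close>, with no standardization in between.
  For \<open>r = s \<or> t\<close>, \<open>\<gamma>(r)\<close> is \<open>\<gamma>(s)\<close> shifted above all entries of \<open>\<gamma>(t)\<close>, then the
  maximum, then \<open>\<gamma>(t)\<close>. If the root is in \<open>R\<close>, admissibility puts all of \<open>s\<close> into \<open>R\<close>: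
  the subword is the whole shifted \<open>\<gamma>(s)\<close>, the maximum, and a subword of \<open>\<gamma>(t)\<close>, giving
  \<open>s \<or> t'\<close>, while the complementary subword lies inside \<open>\<gamma>(t)\<close>. If the root is not in
  \<open>R\<close>, the subword is a word whose entries all dominate those of the word following it, and
  the decreasing tree of such a concatenation is the under product of the two decreasing trees;
  the complementary subword now contains the maximum and gives \<open>s'' \<or> t''\<close>.\<close>

function dec_tree :: "nat list \<Rightarrow> tree" where
  "dec_tree [] = Leaf"
| "dec_tree (a # xs) =
     (let k = length (takeWhile (\<lambda>x. x \<noteq> Max (set (a # xs))) (a # xs))
      in Node (dec_tree (take k (a # xs))) (dec_tree (drop (Suc k) (a # xs))))"
  by pat_completeness auto
termination
proof (relation "measure length")
  fix a xs k
  assume "k = length (takeWhile (\<lambda>x. x \<noteq> Max (set (a # xs))) (a # xs))"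
  moreover have "Max (set (a # xs)) \<in> set (a # xs)" by (rule Max_in) auto
  ultimately show "(take k (a # xs), a # xs) \<in> measure length"
    using takeWhile_lt_helper by (metis in_measure length_take min_less_iff_disj)
qed auto

lemma split_at_Max:
  fixes xs :: "'a::linorder list"
  assumes "xs \<noteq> []"
  obtains as m bs where "xs = as @ m # bs" "\<forall>x\<in>set as. x < m" "\<forall>x\<in>set bs. x \<le> m"
proof -
  have "Max (set xs) \<in> set xs" using assms by simp
  then obtain as bs where xs: "xs = as @ Max (set xs) # bs" and "Max (set xs) \<notin> set as"
    by (metis split_list_first)
  have "\<forall>x\<in>set xs. x \<le> Max (set xs)" by simp
  with xs \<open>Max (set xs) \<notin> set as\<close> have "\<forall>x\<in>set as. x < Max (set xs)"
    by (metis Un_iff order_le_neq_trans set_append)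
  moreover have "\<forall>x\<in>set bs. x \<le> Max (set xs)"
    using xs by (metis Max_ge List.finite_set Un_iff list.set_intros(2) set_append)
  ultimately show thesis using that xs by blast
qed

lemma max_split_induct [case_names Nil split]:
  fixes xs :: "'a::linorder list"
  assumes "P []"
    and "\<And>as m bs. \<forall>x\<in>set as. x < m \<Longrightarrow> \<forall>x\<in>set bs. x \<le> m \<Longrightarrow> P as \<Longrightarrow> P bs \<Longrightarrow>
           P (as @ m # bs)"
  shows "P xs"
proof (induction "length xs" arbitrary: xs rule: less_induct)
  case less
  show ?case
  proof (cases "xs = []")
    case False
    then obtain as m bs where "xs = as @ m # bs" "\<forall>x\<in>set as. x < m" "\<forall>x\<in>set bs. x \<le> m"
      by (rule split_at_Max)
    with less assms(2) show ?thesis by simp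
  qed (simp add: assms(1))
qed

lemma dec_tree_split:
  assumes "\<forall>x\<in>set as. x < m" "\<forall>x\<in>set bs. x \<le> m"
  shows "dec_tree (as @ m # bs) = Node (dec_tree as) (dec_tree bs)"
proof -
  obtain a ys where e: "as @ m # bs = a # ys" by (cases as) auto
  have "Max (set (as @ m # bs)) = m"
    using assms by (intro Max_eqI) auto
  moreover have "takeWhile (\<lambda>x. x \<noteq> m) (as @ m # bs) = as"
    using assms by (subst takeWhile_append2) auto
  ultimately show ?thesis
    unfolding e by (simp only: dec_tree.simps Let_def) (simp add: e[symmetric])
qed

lemma dec_tree_map_strict_mono:
  "strict_mono_on (set xs) f \<Longrightarrow> dec_tree (map f xs) = dec_tree xs"
proof (induction xs rule: max_split_induct)
  case (split as m bs)
  then have "\<forall>x\<in>set (map f as). x < f m" "\<forall>x\<in>set (map f bs). x \<le> f m"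
    by (auto dest: strict_mono_onD intro: strict_mono_on_leD)
  moreover have "strict_mono_on (set as) f" "strict_mono_on (set bs) f"
    using split.prems by (auto intro: monotone_on_subset)
  ultimately show ?case using split by (simp add: dec_tree_split)
qed simp

lemma dec_tree_map_add: "dec_tree (map (\<lambda>x. x + k) xs) = dec_tree xs"
  by (rule dec_tree_map_strict_mono) (simp add: strict_mono_onI)

lemma dec_tree_append_dominated:
  "\<forall>a\<in>set A. \<forall>b\<in>set B. b < a \<Longrightarrow> dec_tree (A @ B) = under (dec_tree A) (dec_tree B)"
proof (induction A rule: max_split_induct)
  case (split as m bs)
  then have "\<forall>x\<in>set (bs @ B). x \<le> m" by fastforce
  then show ?case using split by (simp add: dec_tree_split)
qed simp

lemma strict_mono_on_rank:
  fixes xs :: "'a::linorder list"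
  shows "strict_mono_on (set xs) (\<lambda>x. card {y \<in> set xs. y \<le> x})"
proof (rule strict_mono_onI)
  fix x y assume "x \<in> set xs" "y \<in> set xs" "x < y"
  then have "{z \<in> set xs. z \<le> x} \<subseteq> {z \<in> set xs. z \<le> y}"
    and "y \<in> {z \<in> set xs. z \<le> y} - {z \<in> set xs. z \<le> x}" by auto
  then have "{z \<in> set xs. z \<le> x} \<subset> {z \<in> set xs. z \<le> y}" by blast
  then show "card {z \<in> set xs. z \<le> x} < card {z \<in> set xs. z \<le> y}"
    by (intro psubset_card_mono) auto
qed

lemma st_map_strict_mono:
  assumes "strict_mono_on (set xs) f"
  shows "st (map f xs) = st xs"
proof -
  have "card {y \<in> f ` set xs. y \<le> f x} = card {y \<in> set xs. y \<le> x}" if "x \<in> set xs" for x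
  proof -
    have "{y \<in> f ` set xs. y \<le> f x} = f ` {y \<in> set xs. y \<le> x}"
      using strict_mono_on_less_eq[OF assms _ that] by auto
    moreover have "inj_on f {y \<in> set xs. y \<le> x}"
      using strict_mono_on_imp_inj_on[OF assms] by (rule inj_on_subset) auto
    ultimately show ?thesis by (simp add: card_image)
  qed
  then show ?thesis by (simp add: st_def)
qed

lemma lam_split_at_length:
  assumes "\<sigma> = as @ length \<sigma> # bs" "length \<sigma> \<notin> set as"
  shows "lam \<sigma> = Node (lam (st as)) (lam (st bs))"
proof -
  obtain a xs where \<sigma>: "\<sigma> = a # xs" using assms(1) by (cases \<sigma>) auto
  have "takeWhile (\<lambda>x. x \<noteq> length \<sigma>) (as @ length \<sigma> # bs) = as"
    using assms(2) by (subst takeWhile_append2) auto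
  then have "takeWhile (\<lambda>x. x \<noteq> length \<sigma>) \<sigma> = as" by (metis assms(1))
  moreover have "length \<sigma> \<in> set \<sigma>" using assms(1) by (metis in_set_conv_decomp)
  moreover have "take (length as) \<sigma> = as" "drop (Suc (length as)) \<sigma> = bs"
    using arg_cong[OF assms(1), of "take (length as)"] arg_cong[OF assms(1), of "drop (Suc (length as))"]
    by simp_all
  ultimately show ?thesis
    by (subst \<sigma>, subst lam.simps) (simp add: Let_def flip: \<sigma>)
qed

lemma lam_st: "distinct xs \<Longrightarrow> lam (st xs) = dec_tree xs"
proof (induction xs rule: max_split_induct)
  case (split as m bs)
  let ?xs = "as @ m # bs"
  let ?rank = "\<lambda>x. card {y \<in> set ?xs. y \<le> x}"
  have rank_mono: "strict_mono_on (set ?xs) ?rank" by (rule strict_mono_on_rank)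
  have "{y \<in> set ?xs. y \<le> m} = set ?xs" using split.hyps by auto
  then have "?rank m = length ?xs" using split.prems distinct_card by metis
  moreover have "length ?xs \<notin> set (map ?rank as)"
    using calculation split.hyps rank_mono by (auto dest: strict_mono_onD)
  moreover have "st ?xs = map ?rank as @ ?rank m # map ?rank bs" by (simp add: st_def)
  ultimately have "lam (st ?xs) = Node (lam (st (map ?rank as))) (lam (st (map ?rank bs)))"
    by (intro lam_split_at_length) simp_all
  also have "\<dots> = Node (lam (st as)) (lam (st bs))"
  proof -
    have "set as \<subseteq> set ?xs" "set bs \<subseteq> set ?xs" by auto
    from this[THEN monotone_on_subset[OF rank_mono], THEN st_map_strict_mono] split.IH
    show ?thesis using split.prems by simp
  qed
  finally show ?case using split by (simp add: dec_tree_split)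
qed (simp add: st_def)

lemma gam_Node:
  "gam (Node s t) = map (\<lambda>x. x + isize t) (gam s) @ (isize s + isize t + 1) # gam t"
  and length_gam: "length (gam r) = isize r"
proof -
  show length_gam: "length (gam r) = isize r" for r by (induction r) (auto simp: vee_def)
  show "gam (Node s t) = map (\<lambda>x. x + isize t) (gam s) @ (isize s + isize t + 1) # gam t"
    by (simp add: vee_def length_gam)
qed

declare gam.simps(2) [simp del]

lemma set_gam: "set (gam r) = {1..isize r}"
  by (induction r) (auto simp: gam_Node image_iff)

lemma distinct_gam: "distinct (gam r)"
  by (induction r) (auto simp: gam_Node set_gam distinct_map)

lemma dec_tree_gam: "dec_tree (gam r) = r"
proof (induction r)
  case (Node s t)
  have "dec_tree (gam (Node s t)) = Node (dec_tree (map (\<lambda>x. x + isize t) (gam s))) (dec_tree (gam t))"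
    unfolding gam_Node using set_gam[of s] set_gam[of t] by (intro dec_tree_split) auto
  with Node show ?case by (simp add: dec_tree_map_add)
qed simp

lemma nths_cong: "(\<And>i. i < length xs \<Longrightarrow> i \<in> A \<longleftrightarrow> i \<in> B) \<Longrightarrow> nths xs A = nths xs B"
proof (induction xs arbitrary: A B)
  case (Cons x xs)
  then show ?case by (simp add: nths_Cons)
qed simp

lemma nths_eq_map_nth_filter: "nths xs A = map (nth xs) (filter (\<lambda>i. i \<in> A) [0..<length xs])"
proof (induction xs arbitrary: A)
  case (Cons x xs)
  then show ?case
    by (simp add: nths_Cons upt_conv_Cons filter_map o_def flip: map_Suc_upt del: upt_Suc)
qed simp

lemma sorted_list_of_set_eq_filter_upt:
  assumes "R \<subseteq> {m..<n}"
  shows "sorted_list_of_set R = filter (\<lambda>i. i \<in> R) [m..<n]"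
proof (rule sorted_distinct_set_unique)
  have "finite R" using assms finite_subset by blast
  then show "sorted (sorted_list_of_set R)" "distinct (sorted_list_of_set R)"
    and "set (sorted_list_of_set R) = set (filter (\<lambda>i. i \<in> R) [m..<n])"
    using assms by auto
qed (simp_all add: sorted_wrt_filter)

text \<open>Positions in \<^const>\<open>restr_perm\<close> count from 1, those of \<^const>\<open>nths\<close> from 0.\<close>

lemma restr_perm_eq_st_nths:
  assumes "R \<subseteq> {1..length \<rho>}"
  shows "restr_perm \<rho> R = st (nths \<rho> {i. Suc i \<in> R})"
proof -
  have "R \<subseteq> {Suc 0..<Suc (length \<rho>)}" using assms by auto
  then have "sorted_list_of_set R = filter (\<lambda>i. i \<in> R) (map Suc [0..<length \<rho>])"
    by (simp only: sorted_list_of_set_eq_filter_upt map_Suc_upt)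
  also have "\<dots> = map Suc (filter (\<lambda>i. Suc i \<in> R) [0..<length \<rho>])"
    by (simp add: filter_map o_def)
  finally show ?thesis by (simp add: restr_perm_def nths_eq_map_nth_filter o_def)
qed

lemma restr_tree_eq_dec_tree_nths:
  "R \<subseteq> {1..isize r} \<Longrightarrow> restr_tree r R = dec_tree (nths (gam r) {i. Suc i \<in> R})"
  by (simp add: restr_tree_def restr_perm_eq_st_nths length_gam lam_st distinct_gam)

lemma nths_gam_Node:
  "nths (gam (Node s t)) A =
     map (\<lambda>x. x + isize t) (nths (gam s) A) @ (if isize s \<in> A then [isize s + isize t + 1] else [])
     @ nths (gam t) {j. Suc (j + isize s) \<in> A}"
  by (simp add: gam_Node nths_append nths_Cons nths_map length_gam)

definition left_labels :: "tree \<Rightarrow> nat set \<Rightarrow> nat set" where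
  "left_labels s R = {x \<in> R. x < isize s + 1}"

definition right_labels :: "tree \<Rightarrow> nat set \<Rightarrow> nat set" where
  "right_labels s R = (\<lambda>x. x - (isize s + 1)) ` {x \<in> R. isize s + 1 < x}"

lemma prune1_Node:
  "prune1 (Node s t) R =
     (if isize s + 1 \<in> R then Node s (prune1 t (right_labels s R))
      else under (prune1 s (left_labels s R)) (prune1 t (right_labels s R)))"
  by (simp add: left_labels_def right_labels_def Let_def)

lemma prune2_Node:
  "prune2 (Node s t) R =
     (if isize s + 1 \<in> R then prune2 t (right_labels s R)
      else Node (prune2 s (left_labels s R)) (prune2 t (right_labels s R)))"
  by (simp add: left_labels_def right_labels_def Let_def)

declare prune1.simps(2) [simp del] prune2.simps(2) [simp del]

lemma mem_right_labels_iff: "y \<in> right_labels s R \<longleftrightarrow> 0 < y \<and> y + (isize s + 1) \<in> R"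
proof
  assume "0 < y \<and> y + (isize s + 1) \<in> R"
  then show "y \<in> right_labels s R"
    unfolding right_labels_def by (intro rev_image_eqI[of "y + (isize s + 1)"]) auto
next
  assume "y \<in> right_labels s R"
  then obtain x where "x \<in> R" "isize s + 1 < x" "y = x - (isize s + 1)"
    by (auto simp: right_labels_def)
  moreover from this have "y + (isize s + 1) = x" by arith
  ultimately show "0 < y \<and> y + (isize s + 1) \<in> R" by simp
qed

lemma nths_gam_Node_labels:
  "nths (gam (Node s t)) {i. Suc i \<in> R} =
     map (\<lambda>x. x + isize t) (nths (gam s) {i. Suc i \<in> left_labels s R})
     @ (if isize s + 1 \<in> R then [isize s + isize t + 1] else [])
     @ nths (gam t) {i. Suc i \<in> right_labels s R}"
  and nths_gam_Node_co_labels: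
  "nths (gam (Node s t)) {i. Suc i \<notin> R} =
     map (\<lambda>x. x + isize t) (nths (gam s) {i. Suc i \<notin> left_labels s R})
     @ (if isize s + 1 \<in> R then [] else [isize s + isize t + 1])
     @ nths (gam t) {i. Suc i \<notin> right_labels s R}"
  using nths_cong[of "gam s" "{i. Suc i \<in> R}" "{i. Suc i \<in> left_labels s R}"]
    nths_cong[of "gam s" "{i. Suc i \<notin> R}" "{i. Suc i \<notin> left_labels s R}"]
  by (simp_all add: nths_gam_Node mem_right_labels_iff left_labels_def length_gam add.commute)

lemma lsub_subset: "lsub r x \<subseteq> {1..isize r}"
proof (induction r arbitrary: x)
  case (Node s t)
  show ?case using Node.IH(1)[of x] Node.IH(2)[of "x - (isize s + 1)"]
    by (auto simp: Let_def)
qed simp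

lemma admissible_left_labels:
  assumes "admissible (Node s t) R"
  shows "admissible s (left_labels s R)"
  unfolding admissible_def
proof (intro conjI ballI)
  show "left_labels s R \<subseteq> {1..isize s}"
    using assms by (auto simp: admissible_def left_labels_def)
  fix x assume "x \<in> left_labels s R"
  then have "x \<in> R" and "lsub (Node s t) x = lsub s x" by (auto simp: left_labels_def)
  with assms have "lsub s x \<subseteq> R" by (metis admissible_def)
  then show "lsub s x \<subseteq> left_labels s R"
    using lsub_subset[of s x] by (auto simp: left_labels_def)
qed

lemma admissible_right_labels:
  assumes "admissible (Node s t) R"
  shows "admissible t (right_labels s R)"
  unfolding admissible_def
proof (intro conjI ballI)
  show "right_labels s R \<subseteq> {1..isize t}"
    using assms by (auto simp: admissible_def mem_right_labels_iff)
  fix y assume "y \<in> right_labels s R"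
  then have "y + (isize s + 1) \<in> R" and "lsub (Node s t) (y + (isize s + 1)) = (\<lambda>z. z + (isize s + 1)) ` lsub t y"
    by (simp_all add: mem_right_labels_iff)
  with assms have "(\<lambda>z. z + (isize s + 1)) ` lsub t y \<subseteq> R"
    by (metis admissible_def)
  then show "lsub t y \<subseteq> right_labels s R"
    using lsub_subset[of t y] by (force simp: mem_right_labels_iff)
qed

lemma admissible_root_left_subtree:
  assumes "admissible (Node s t) R" "isize s + 1 \<in> R"
  shows "{1..isize s} \<subseteq> R"
proof -
  have "lsub (Node s t) (isize s + 1) = {1..isize s}" by simp
  with assms show ?thesis by (metis admissible_def)
qed

lemma set_nths_gam: "set (nths (gam r) A) \<subseteq> {1..isize r}"
  using set_nths_subset set_gam by metis

lemma dec_tree_nths_gam_prune1: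
  "admissible r R \<Longrightarrow> dec_tree (nths (gam r) {i. Suc i \<in> R}) = prune1 r R"
proof (induction r arbitrary: R)
  case (Node s t)
  let ?shift = "map (\<lambda>x. x + isize t)" and ?m = "isize s + isize t + 1"
  let ?S = "left_labels s R" and ?T = "right_labels s R"
  let ?ls = "nths (gam s) {i. Suc i \<in> ?S}" and ?lt = "nths (gam t) {i. Suc i \<in> ?T}"
  have IH: "dec_tree ?ls = prune1 s ?S" "dec_tree ?lt = prune1 t ?T"
    using Node admissible_left_labels admissible_right_labels by blast+
  have bounds: "set ?ls \<subseteq> {1..isize s}" "set ?lt \<subseteq> {1..isize t}"
    by (rule set_nths_gam)+
  show ?case
  proof (cases "isize s + 1 \<in> R")
    case True
    with Node.prems have "{1..isize s} \<subseteq> R" by (rule admissible_root_left_subtree)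
    then have "?ls = gam s" by (intro nths_all) (auto simp: left_labels_def length_gam)
    with True have "nths (gam (Node s t)) {i. Suc i \<in> R} = ?shift (gam s) @ ?m # ?lt"
      by (simp add: nths_gam_Node_labels)
    also have "dec_tree \<dots> = Node (dec_tree (?shift (gam s))) (dec_tree ?lt)"
      using bounds \<open>?ls = gam s\<close> by (intro dec_tree_split) auto
    also have "\<dots> = prune1 (Node s t) R"
      using True IH by (simp add: prune1_Node dec_tree_map_add dec_tree_gam)
    finally show ?thesis .
  next
    case False
    then have "nths (gam (Node s t)) {i. Suc i \<in> R} = ?shift ?ls @ ?lt"
      by (simp add: nths_gam_Node_labels)
    also have "dec_tree \<dots> = under (dec_tree (?shift ?ls)) (dec_tree ?lt)"
      using bounds by (intro dec_tree_append_dominated) fastforce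
    also have "\<dots> = prune1 (Node s t) R"
      using False IH by (simp add: prune1_Node dec_tree_map_add)
    finally show ?thesis .
  qed
qed simp

lemma dec_tree_nths_gam_prune2:
  "admissible r R \<Longrightarrow> dec_tree (nths (gam r) {i. Suc i \<notin> R}) = prune2 r R"
proof (induction r arbitrary: R)
  case (Node s t)
  let ?shift = "map (\<lambda>x. x + isize t)" and ?m = "isize s + isize t + 1"
  let ?S = "left_labels s R" and ?T = "right_labels s R"
  let ?ls = "nths (gam s) {i. Suc i \<notin> ?S}" and ?lt = "nths (gam t) {i. Suc i \<notin> ?T}"
  have IH: "dec_tree ?ls = prune2 s ?S" "dec_tree ?lt = prune2 t ?T"
    using Node admissible_left_labels admissible_right_labels by blast+
  show ?case
  proof (cases "isize s + 1 \<in> R")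
    case True
    with Node.prems have "{1..isize s} \<subseteq> R" by (rule admissible_root_left_subtree)
    then have "?ls = nths (gam s) {}"
      by (intro nths_cong) (auto simp: left_labels_def length_gam)
    with True IH show ?thesis by (simp add: nths_gam_Node_co_labels prune2_Node)
  next
    case False
    then have "nths (gam (Node s t)) {i. Suc i \<notin> R} = ?shift ?ls @ ?m # ?lt"
      by (simp add: nths_gam_Node_co_labels)
    also have "dec_tree \<dots> = Node (dec_tree (?shift ?ls)) (dec_tree ?lt)"
      using set_nths_gam[of s] set_nths_gam[of t] by (intro dec_tree_split) fastforce+
    also have "\<dots> = prune2 (Node s t) R"
      using False IH by (simp add: prune2_Node dec_tree_map_add)
    finally show ?thesis .
  qed
qed simp

theorem lemma8p9:
  fixes r :: tree and R :: "nat set"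
  assumes "admissible r R"
  shows "restr_tree r R = prune1 r R \<and> restr_tree r ({1..isize r} - R) = prune2 r R"
proof
  have "R \<subseteq> {1..isize r}" using assms by (simp add: admissible_def)
  then show "restr_tree r R = prune1 r R"
    by (simp add: restr_tree_eq_dec_tree_nths dec_tree_nths_gam_prune1 assms)
  have "nths (gam r) {i. Suc i \<in> {1..isize r} - R} = nths (gam r) {i. Suc i \<notin> R}"
    by (rule nths_cong) (auto simp: length_gam)
  then show "restr_tree r ({1..isize r} - R) = prune2 r R"
    by (simp add: restr_tree_eq_dec_tree_nths dec_tree_nths_gam_prune2 assms)
qed

end
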